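(* Let $\mathbf{G}=(\mathbf{L},\mathbf{H})$ be a $2\times M$ partial-monitoring game with real matrices such that $\mathbf{L}=\mathbf{K}\mathbf{H}$ for some $\mathbf{K}\in\mathbb{R}^{2\times2}$. Then there exists a $2\times M$ bandit game $\mathbf{G}'=(\mathbf{L}',\mathbf{H}')$ (i.e. $\mathbf{L}'=\mathbf{H}'$) with $\mathbf{G}\le\mathbf{G}'$. If $\mathbf{K}=\begin{pmatrix}0&0\\1&1\end{pmatrix}$, then $\mathbf{G}'$ can be chosen with $\mathbf{G}\simeq\mathbf{G}'$.
   Context: A partial-monitoring game $\mathbf{G}=(\mathbf{L},\mathbf{H})$ has real $N\times M$ loss matrix $\mathbf{L}=(\ell_{ij})$ and feedback matrix $\mathbf{H}=(h_{ij})$ (here entries may be arbitrary reals); $\underline{n}=\{1,\dots,n\}$. Nature fixes an outcome sequence $J_1,J_2,\ldots\in\underline{M}$ in advance; at each time $t$ Learner chooses (possibly at random) $I_t\in\underline{N}$ based on internal randomization and past feedbacks $h_{I_s,J_s}$, $s<t$, then observes $h_{I_t,J_t}$ and suffers loss $\ell_{I_t,J_t}$; such a rule is a strategy $\mathcal{A}$. Regret $R_T(\mathcal{A},\mathbf{G})=\mathbb{E}\big[\sum_{t=1}^T\ell_{I_t,J_t}-\min_i\sum_{t=1}^T\ell_{i,J_t}\big]$. A bandit game is one with $\mathbf{H}=\mathbf{L}$. For two $N\times M$ games, $\mathbf{G}'\le\mathbf{G}$ means: for every algorithm $\mathcal{A}$ there is an algorithm $\mathcal{A}'$ such that, for every outcome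 sequence, $\mathcal{A}'$ on $\mathbf{G}'$ chooses the same action sequence as $\mathcal{A}$ on $\mathbf{G}$ and $R_T(\mathcal{A}',\mathbf{G}')\le R_T(\mathcal{A},\mathbf{G})$; $\mathbf{G}\simeq\mathbf{G}'$ means both $\mathbf{G}\le\mathbf{G}'$ and $\mathbf{G}'\le\mathbf{G}$. *)

theory Defs
  imports "HOL-Probability.Probability"
begin

text \<open>Row i of a matrix is indexed by the action, column j by the outcome.\<close>

type_synonym ('m, 'n) game = "(real^'m^'n) \<times> (real^'m^'n)"

definition loss_mat :: "('m::finite, 'n::finite) game \<Rightarrow> real^'m^'n" where
  "loss_mat G = fst G"

definition feedback_mat :: "('m::finite, 'n::finite) game \<Rightarrow> real^'m^'n" where
  "feedback_mat G = snd G"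

definition bandit_game :: "('m::finite, 'n::finite) game \<Rightarrow> bool" where
  "bandit_game G \<longleftrightarrow> feedback_mat G = loss_mat G"

text \<open>A (randomized) strategy in behavioural form: given the history of the
  learner's own past actions together with the observed feedbacks, it outputs
  a probability distribution of the next action.\<close>

type_synonym ('n) strategy = "('n \<times> real) list \<Rightarrow> 'n pmf"

text \<open>Distribution of the action sequence I_1..I_T played by strategy A on a game
  with feedback matrix H against the outcome sequence J (time indexed from 0).\<close>

primrec actseq :: "real^'m::finite^'n::finite \<Rightarrow> 'n strategy \<Rightarrow> (nat \<Rightarrow> 'm) \<Rightarrow> nat \<Rightarrow> 'n list pmf" where
  "actseq H A J 0 = return_pmf []"
| "actseq H A J (Suc T) =
     bind_pmf (actseq H A J T)
       (\<lambda>xs. map_pmf (\<lambda>i. xs @ [i])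
               (A (map (\<lambda>t. (xs ! t, H $ (xs ! t) $ J t)) [0..<length xs])))"

definition regret :: "('m::finite, 'n::finite) game \<Rightarrow> 'n strategy \<Rightarrow> (nat \<Rightarrow> 'm) \<Rightarrow> nat \<Rightarrow> real" where
  "regret G A J T =
     measure_pmf.expectation (actseq (feedback_mat G) A J T)
       (\<lambda>xs. \<Sum>t<T. loss_mat G $ (xs ! t) $ J t)
     - Min (range (\<lambda>i. \<Sum>t<T. loss_mat G $ i $ J t))"

definition game_le :: "('m::finite, 'n::finite) game \<Rightarrow> ('m::finite, 'n::finite) game \<Rightarrow> bool" where
  "game_le G' G \<longleftrightarrow>
     (\<forall>A. \<exists>A'. \<forall>J T.
        actseq (feedback_mat G') A' J T = actseq (feedback_mat G) A J T
        \<and> regret G' A' J T \<le> regret G A J T)"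

definition game_equiv :: "('m::finite, 'n::finite) game \<Rightarrow> ('m::finite, 'n::finite) game \<Rightarrow> bool" where
  "game_equiv G G' \<longleftrightarrow> game_le G G' \<and> game_le G' G"

end

theory Submission
  imports Defs
begin

(* Two elementary operations transform a game into one that is
   at least as easy for Learner:
   (1) Feedback relabelling: if each feedback entry of G, H i j, is a function
       g i of the feedback entry H' i j of G', then a strategy for G is run on
       G' by translating each observation through g; it plays the same action
       distribution on every outcome sequence.
   (2) Column shift: adding an outcome-dependent constant c j to all losses
       leaves the regret unchanged, since it shifts the learner's and the best
       action's cumulative loss by the same amount.
   For a 2-action game with L = K H we write L = B + c with the bandit matrix
   B i j = (K i i - K i' i) H i j (i' the other action).  Then H determines B,
   so (L, H) <= (B, B); and if both diagonal gaps K i i - K i' i are nonzero,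
   B determines H, giving the converse.  The matrix K = [0 0; 1 1] has gaps
   -1 and 1, which yields the equivalence claimed in the theorem. *)

lemma actseq_relabel:
  assumes "\<And>i j. H $ i $ j = g i (H' $ i $ j)"
  shows "actseq H' (\<lambda>hist. A (map (\<lambda>(i, h). (i, g i h)) hist)) J T = actseq H A J T"
  by (induction T) (simp_all add: assms o_def)

text \<open>Only finitely many action sequences occur, so every loss functional is
  integrable.\<close>

lemma actseq_finite: "finite (set_pmf (actseq H A J T))"
  by (induction T) auto

lemma regret_column_shift:
  assumes shift: "\<And>i j. L $ i $ j = L' $ i $ j + c j"
  shows "regret (L, H) A J T = regret (L', H) A J T"
proof -
  let ?C = "\<Sum>t<T. c (J t)"
  let ?cum' = "\<lambda>i. \<Sum>t<T. L' $ i $ J t"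
  have cum: "(\<Sum>t<T. L $ (f t) $ J t) = (\<Sum>t<T. L' $ (f t) $ J t) + ?C" for f
    by (simp add: shift sum.distrib)
  have min_shift: "Min (range (\<lambda>i. ?cum' i + ?C)) = Min (range ?cum') + ?C"
    using mono_Min_commute[of "\<lambda>x. x + ?C" "range ?cum'"]
    by (simp add: mono_def image_image)
  have "integrable (measure_pmf (actseq H A J T)) (\<lambda>xs. \<Sum>t<T. L' $ (xs ! t) $ J t)"
    by (rule integrable_measure_pmf_finite[OF actseq_finite])
  then show ?thesis
    by (simp add: regret_def loss_mat_def feedback_mat_def cum min_shift)
qed

lemma game_le_by_simulation:
  fixes L H L' H' :: "real^'m::finite^'n::finite"
  assumes feedback: "\<And>i j. H $ i $ j = g i (H' $ i $ j)"
    and loss: "\<And>i j. L $ i $ j = L' $ i $ j + c j"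
  shows "game_le (L', H') (L, H)"
  unfolding game_le_def
proof
  fix A :: "'n strategy"
  define A' where "A' = (\<lambda>hist. A (map (\<lambda>(i, h). (i, g i h)) hist))"
  have same_actions: "actseq H' A' J T = actseq H A J T" for J T
    unfolding A'_def by (rule actseq_relabel[OF feedback])
  have "regret (L', H') A' J T = regret (L', H) A J T" for J T
    by (simp add: regret_def loss_mat_def feedback_mat_def same_actions)
  also have "regret (L', H) A J T = regret (L, H) A J T" for J T
    by (rule regret_column_shift[OF loss, symmetric])
  finally have same_regret: "regret (L', H') A' J T = regret (L, H) A J T" for J T .
  show "\<exists>A'. \<forall>J T. actseq (feedback_mat (L', H')) A' J T = actseq (feedback_mat (L, H)) A J T
      \<and> regret (L', H') A' J T \<le> regret (L, H) A J T"
    by (intro exI[of _ A'] allI conjI) (simp_all add: feedback_mat_def same_actions same_regret)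
qed

definition diag_gap :: "real^2^2 \<Rightarrow> 2 \<Rightarrow> real" where
  "diag_gap K i = K $ i $ i - K $ (1 - i) $ i"

definition bandit_part :: "real^2^2 \<Rightarrow> real^'m^2 \<Rightarrow> real^'m^2" where
  "bandit_part K H = (\<chi> i j. diag_gap K i * H $ i $ j)"

definition column_offset :: "real^2^2 \<Rightarrow> real^'m^2 \<Rightarrow> 'm \<Rightarrow> real" where
  "column_offset K H j = K $ 1 $ 0 * H $ 0 $ j + K $ 0 $ 1 * H $ 1 $ j"

lemma UNIV_two: "(UNIV :: 2 set) = {0, 1}"
  using exhaust_2 by fastforce

lemma loss_decomposition:
  fixes H :: "real^'m::finite^2"
  shows "(K ** H) $ i $ j = bandit_part K H $ i $ j + column_offset K H j"
proof -
  have "i = 0 \<or> i = 1" using UNIV_two by auto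
  then show ?thesis
    by (auto simp: matrix_matrix_mult_def UNIV_two bandit_part_def diag_gap_def column_offset_def algebra_simps)
qed

lemma game_le_bandit_part:
  fixes H :: "real^'m::finite^2"
  shows "game_le (K ** H, H) (bandit_part K H, bandit_part K H)"
  by (rule game_le_by_simulation[where g = "\<lambda>i h. diag_gap K i * h"
        and c = "\<lambda>j. - column_offset K H j"])
     (simp_all add: bandit_part_def loss_decomposition)

text \<open>If both diagonal gaps are nonzero, the bandit part determines H, so the
  game and its bandit part are equivalent.\<close>

lemma game_equiv_bandit_part:
  fixes H :: "real^'m::finite^2"
  assumes nondegenerate: "\<And>i. diag_gap K i \<noteq> 0"
  shows "game_equiv (K ** H, H) (bandit_part K H, bandit_part K H)"
proof -
  have "game_le (bandit_part K H, bandit_part K H) (K ** H, H)"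
    by (rule game_le_by_simulation[where g = "\<lambda>i h. h / diag_gap K i"
          and c = "column_offset K H"])
       (simp_all add: bandit_part_def loss_decomposition nondegenerate)
  then show ?thesis
    by (simp add: game_equiv_def game_le_bandit_part)
qed

theorem proposition2:
  fixes L H :: "real^'m::finite^2" and K :: "real^2^2"
  assumes "L = K ** H"
  shows "(\<exists>G' :: ('m, 2) game. bandit_game G' \<and> game_le (L, H) G')
       \<and> (K = (\<chi> i j. if i = 1 then 1 else 0) \<longrightarrow>
            (\<exists>G' :: ('m, 2) game. bandit_game G' \<and> game_equiv (L, H) G'))"
proof -
  define B where "B = bandit_part K H"
  have bandit: "bandit_game (B, B)"
    by (simp add: bandit_game_def loss_mat_def feedback_mat_def)
  have "game_equiv (L, H) (B, B)" if K: "K = (\<chi> i j. if i = 1 then 1 else 0)"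
  proof -
    have "diag_gap K i \<noteq> 0" for i
      using UNIV_two K by (auto simp: diag_gap_def)
    then show ?thesis
      unfolding assms B_def by (rule game_equiv_bandit_part)
  qed
  moreover have "game_le (L, H) (B, B)"
    unfolding assms B_def by (rule game_le_bandit_part)
  ultimately show ?thesis
    using bandit by blast
qed

end
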